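(* Let $m\ge 2$ and let $H_1,\dots,H_k$ be complete graphs, each with at least two vertices. Then for every $n$, $\mathrm{ex}^{\mathrm{col}}(n,(H_1,\dots,H_k),K_m)=\max_{i\le k}\mathcal N(H_i,T_{m-1}(n))$; that is, the maximum of $\sum_{i=1}^k\mathcal N(H_i,G_i)$ over edge-colored $K_m$-free $n$-vertex graphs $G$ is attained by the Tur\'an graph $T_{m-1}(n)$ with all edges of a single color.
   Context: $T_{m-1}(n)$ is the complete $(m-1)$-partite graph on $n$ vertices with parts of size $\lfloor n/(m-1)\rfloor$ or $\lceil n/(m-1)\rceil$. $\mathcal N(H,G)$ is the number of subgraphs of $G$ isomorphic to $H$. For a graph $G$ whose edges are colored with colors $1,\dots,k$, $G_i$ is the subgraph of edges of color $i$; $\mathrm{ex}^{\mathrm{col}}(n,(H_1,\dots,H_k),F)$ is the maximum of $\sum_i\mathcal N(H_i,G_i)$ over all $F$-free $n$-vertex graphs $G$ and all such colorings. *)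

theory Defs
  imports Main
begin

definition is_graph :: "nat \<Rightarrow> nat set set \<Rightarrow> bool" where
  "is_graph n E \<longleftrightarrow> (\<forall>e\<in>E. e \<subseteq> {..<n} \<and> card e = 2)"

definition num_cliques :: "nat \<Rightarrow> nat \<Rightarrow> nat set set \<Rightarrow> nat" where
  "num_cliques n r E = card {S. S \<subseteq> {..<n} \<and> card S = r \<and>
      (\<forall>x\<in>S. \<forall>y\<in>S. x \<noteq> y \<longrightarrow> {x, y} \<in> E)}"

definition Km_free :: "nat \<Rightarrow> nat \<Rightarrow> nat set set \<Rightarrow> bool" where
  "Km_free n m E \<longleftrightarrow> num_cliques n m E = 0"

text \<open>Colored count: colors 1..k, the color-i subgraph G_i, and H_i = K_{r i}.\<close>
definition col_count :: "nat \<Rightarrow> nat \<Rightarrow> (nat \<Rightarrow> nat) \<Rightarrow> nat set set \<Rightarrow> (nat set \<Rightarrow> nat) \<Rightarrow> nat" where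
  "col_count n k r E c = (\<Sum>i=1..k. num_cliques n (r i) {e\<in>E. c e = i})"

definition ex_col :: "nat \<Rightarrow> nat \<Rightarrow> (nat \<Rightarrow> nat) \<Rightarrow> nat \<Rightarrow> nat" where
  "ex_col n k r m = Max {col_count n k r E c | E c.
      is_graph n E \<and> Km_free n m E \<and> (\<forall>e\<in>E. c e \<in> {1..k})}"

text \<open>Turan graph T_p(n) on {..<n}: parts are residue classes mod p,
  of sizes floor(n/p) or ceil(n/p).\<close>
definition turan :: "nat \<Rightarrow> nat \<Rightarrow> nat set set" where
  "turan n p = {{x, y} | x y. x < n \<and> y < n \<and> x mod p \<noteq> y mod p}"

end

theory Submission
  imports Defs "HOL-Library.Ramsey"
begin

text \<open>
  Weight the vertices by natural numbers and count each monochromatic clique with the product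
  of the weights of its vertices, i.e. count in a blow-up of the coloured graph. For two
  non-adjacent vertices this count is linear in their two weights, so moving the whole weight
  of one of them onto the other does not decrease it for one of the two choices (Zykov
  symmetrisation). Iterating, all weight ends up on a clique \<open>P\<close> of \<open>G\<close>, which has fewer than
  \<open>m\<close> vertices. On the complete graph on \<open>P\<close>, let one vertex copy the colours of another: the
  two ways of doing this average to at least the original count, so the maximising colourings
  are closed under copying, and copying leads from one of them to a monochromatic one. Its count
  is an elementary symmetric sum of at most \<open>m - 1\<close> weights with total \<open>n\<close>; this is largest
  for balanced weights, where it counts the cliques of the Turan graph with \<open>m - 1\<close> parts.
\<close>

section \<open>Elementary symmetric sums\<close>

definition elem_sym :: "'a set \<Rightarrow> ('a \<Rightarrow> nat) \<Rightarrow> nat \<Rightarrow> nat" where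
  "elem_sym A w r = (\<Sum>S | S \<subseteq> A \<and> card S = r. \<Prod>x\<in>S. w x)"

lemma subsets_card_Suc_insert:
  assumes "finite A" "a \<notin> A"
  shows "{S. S \<subseteq> insert a A \<and> card S = Suc r}
    = {S. S \<subseteq> A \<and> card S = Suc r} \<union> insert a ` {S. S \<subseteq> A \<and> card S = r}"
proof (intro set_eqI iffI)
  fix S assume S: "S \<in> {S. S \<subseteq> insert a A \<and> card S = Suc r}"
  show "S \<in> {S. S \<subseteq> A \<and> card S = Suc r} \<union> insert a ` {S. S \<subseteq> A \<and> card S = r}"
  proof (cases "a \<in> S")
    case True
    then have "S = insert a (S - {a})" "S - {a} \<subseteq> A" "card (S - {a}) = r"
      using S by auto
    then show ?thesis by blast
  qed (use S in auto)
next
  fix S assume "S \<in> {S. S \<subseteq> A \<and> card S = Suc r} \<union> insert a ` {S. S \<subseteq> A \<and> card S = r}"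
  then show "S \<in> {S. S \<subseteq> insert a A \<and> card S = Suc r}"
  proof
    assume "S \<in> insert a ` {S. S \<subseteq> A \<and> card S = r}"
    then obtain T where "T \<subseteq> A" "card T = r" "S = insert a T" by blast
    moreover have "finite T" "a \<notin> T" using calculation assms finite_subset by auto
    ultimately show ?thesis by auto
  qed auto
qed

lemma elem_sym_empty: "elem_sym {} w r = (if r = 0 then 1 else 0)"
proof -
  have subsets: "{S. S \<subseteq> {} \<and> card S = r} = (if r = 0 then {{}} else {})" by auto
  show ?thesis unfolding elem_sym_def subsets by simp
qed

lemma elem_sym_0 [simp]:
  assumes "finite A" shows "elem_sym A w 0 = 1"
proof -
  have "{S. S \<subseteq> A \<and> card S = 0} = {{}}" using assms by (auto dest: finite_subset)
  then show ?thesis by (simp add: elem_sym_def)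
qed

lemma elem_sym_insert:
  assumes "finite A" "a \<notin> A"
  shows "elem_sym (insert a A) w (Suc r) = elem_sym A w (Suc r) + w a * elem_sym A w r"
proof -
  let ?L = "\<lambda>r. {S. S \<subseteq> A \<and> card S = r}"
  have fin: "finite (?L r)" "finite (?L (Suc r))" using assms(1) by auto
  have inj: "inj_on (insert a) (?L r)" using assms(2) by (auto simp: inj_on_def)
  have "elem_sym (insert a A) w (Suc r) = elem_sym A w (Suc r) + (\<Sum>S\<in>?L r. \<Prod>x\<in>insert a S. w x)"
    unfolding elem_sym_def subsets_card_Suc_insert[OF assms]
    using fin inj assms(2) by (subst sum.union_disjoint) (auto simp: sum.reindex)
  also have "(\<Sum>S\<in>?L r. \<Prod>x\<in>insert a S. w x) = w a * elem_sym A w r"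
    unfolding elem_sym_def sum_distrib_left
  proof (intro sum.cong refl)
    fix S assume "S \<in> ?L r"
    then have "finite S" "a \<notin> S" using assms finite_subset by auto
    then show "(\<Prod>x\<in>insert a S. w x) = w a * (\<Prod>x\<in>S. w x)" by simp
  qed
  finally show ?thesis .
qed

lemma elem_sym_cong: "(\<And>x. x \<in> A \<Longrightarrow> w x = w' x) \<Longrightarrow> elem_sym A w r = elem_sym A w' r"
  unfolding elem_sym_def by (intro sum.cong refl prod.cong) auto

lemma elem_sym_zero_extend:
  assumes "finite A" "finite Z" "\<And>x. x \<in> Z \<Longrightarrow> w x = 0"
  shows "elem_sym (A \<union> Z) w r = elem_sym A w r"
  unfolding elem_sym_def
proof (rule sum.mono_neutral_right)
  show "finite {S. S \<subseteq> A \<union> Z \<and> card S = r}" using assms by auto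
  show "\<forall>S\<in>{S. S \<subseteq> A \<union> Z \<and> card S = r} - {S. S \<subseteq> A \<and> card S = r}. (\<Prod>x\<in>S. w x) = 0"
  proof
    fix S assume S: "S \<in> {S. S \<subseteq> A \<union> Z \<and> card S = r} - {S. S \<subseteq> A \<and> card S = r}"
    then obtain z where "z \<in> S" "z \<in> Z" by auto
    moreover have "finite S" using S assms finite_subset by auto
    ultimately show "(\<Prod>x\<in>S. w x) = 0" using assms(3) by (auto intro: prod_zero)
  qed
qed auto

lemma elem_sym_reindex:
  assumes "inj_on h A"
  shows "elem_sym (h ` A) w r = elem_sym A (w \<circ> h) r"
proof -
  have "{T. T \<subseteq> h ` A \<and> card T = r} = image h ` {S. S \<subseteq> A \<and> card S = r}"
  proof (intro set_eqI iffI)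
    fix T assume "T \<in> {T. T \<subseteq> h ` A \<and> card T = r}"
    then obtain S where "S \<subseteq> A" "T = h ` S" "card T = r" by (auto elim!: subset_imageE)
    moreover have "card S = card T" using calculation assms by (metis card_image inj_on_subset)
    ultimately show "T \<in> image h ` {S. S \<subseteq> A \<and> card S = r}" by auto
  next
    fix T assume "T \<in> image h ` {S. S \<subseteq> A \<and> card S = r}"
    then show "T \<in> {T. T \<subseteq> h ` A \<and> card T = r}"
      using assms by (auto simp: card_image inj_on_subset)
  qed
  moreover have "inj_on (image h) {S. S \<subseteq> A \<and> card S = r}"
    using assms by (auto intro: inj_on_subset[OF inj_on_image_Pow])
  ultimately show ?thesis
    unfolding elem_sym_def using assms
    by (simp add: sum.reindex prod.reindex inj_on_subset)
qed

text \<open>Both sides are affine in \<open>w a + w b\<close> and \<open>w a * w b\<close> with the same non-negative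
  coefficients; the transfer keeps the sum and does not decrease the product.\<close>

lemma elem_sym_transfer:
  assumes "finite I" "a \<in> I" "b \<in> I" "a \<noteq> b" "w b < w a"
  shows "elem_sym I w r \<le> elem_sym I (w(a := w a - 1, b := w b + 1)) r"
proof -
  define J where "J = I - {a, b}"
  define w' where "w' = w(a := w a - 1, b := w b + 1)"
  have I: "I = insert a (insert b J)" and J: "finite J" "a \<notin> insert b J" "b \<notin> J"
    using assms by (auto simp: J_def)
  have expand1: "elem_sym I v (Suc 0) = elem_sym J v (Suc 0) + v a + v b" for v
    using J unfolding I by (simp add: elem_sym_insert)
  have expand2: "elem_sym I v (Suc (Suc q)) = elem_sym J v (Suc (Suc q))
      + (v a + v b) * elem_sym J v (Suc q) + v a * v b * elem_sym J v q" for v q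
    using J unfolding I by (simp add: elem_sym_insert algebra_simps)
  have J_eq: "elem_sym J w' q = elem_sym J w q" for q
    by (rule elem_sym_cong) (auto simp: w'_def J_def)
  have w'_ab: "w' a = w a - 1" "w' b = w b + 1" using assms(4) by (auto simp: w'_def)
  then have sum_eq: "w' a + w' b = w a + w b" using assms(5) by simp
  obtain d where d: "w a = Suc (w b + d)" using assms(5) less_imp_Suc_add by blast
  have prod_le: "w a * w b \<le> w' a * w' b" unfolding w'_ab d by (simp add: algebra_simps)
  have "elem_sym I w r \<le> elem_sym I w' r"
  proof (cases r)
    case (Suc r')
    show ?thesis
    proof (cases r')
      case 0
      then show ?thesis using Suc sum_eq by (simp add: expand1 J_eq)
    next
      case (Suc q)
      have "w a * w b * elem_sym J w q \<le> w' a * w' b * elem_sym J w q"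
        using prod_le by (rule mult_right_mono) simp
      then show ?thesis using \<open>r = Suc r'\<close> Suc sum_eq by (simp add: expand2 J_eq)
    qed
  qed (use assms(1) in simp)
  then show ?thesis by (simp add: w'_def)
qed

lemma sum_fun_upd2:
  fixes f :: "'a \<Rightarrow> 'b::comm_monoid_add"
  assumes "finite A" "u \<in> A" "v \<in> A" "u \<noteq> v"
  shows "sum (f(u := x, v := y)) A + f u + f v = sum f A + x + y"
proof -
  let ?B = "A - {u} - {v}"
  have split: "sum g A = g u + (g v + sum g ?B)" for g :: "'a \<Rightarrow> 'b"
  proof -
    have "sum g A = g u + sum g (A - {u})" by (rule sum.remove[OF assms(1,2)])
    also have "sum g (A - {u}) = g v + sum g ?B" by (rule sum.remove) (use assms in auto)
    finally show ?thesis .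
  qed
  have "sum (f(u := x, v := y)) ?B = sum f ?B" by (rule sum.cong) auto
  then show ?thesis unfolding split[of f] split[of "f(u := x, v := y)"]
    using assms(4) by (simp add: ac_simps)
qed

lemma elem_sym_le_balanced:
  assumes "finite I" and balanced: "\<forall>x\<in>I. \<forall>y\<in>I. t y \<le> t x + 1" and "sum w I = sum t I"
  shows "elem_sym I w r \<le> elem_sym I t r"
  using assms(3)
proof (induction "\<Sum>x\<in>I. w x - t x" arbitrary: w rule: less_induct)
  case less
  show ?case
  proof (cases "\<exists>a\<in>I. t a < w a")
    case False
    then have "\<forall>x\<in>I. w x \<le> t x" by (simp add: not_less)
    then have "\<forall>x\<in>I. w x = t x"
      using sum_strict_mono_ex1[OF assms(1)] less.prems by (metis le_neq_implies_less less_irrefl)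
    then show ?thesis by (simp cong: elem_sym_cong)
  next
    case True
    then obtain a where a: "a \<in> I" "t a < w a" by blast
    have "\<exists>b\<in>I. w b < t b"
    proof (rule ccontr)
      assume "\<not> (\<exists>b\<in>I. w b < t b)"
      then have "sum t I < sum w I" using sum_strict_mono_ex1[OF assms(1), of t w] a by (auto simp: not_less)
      then show False using less.prems by simp
    qed
    then obtain b where b: "b \<in> I" "w b < t b" by blast
    have "w b < w a" using a b balanced by fastforce
    define w' where "w' = w(a := w a - 1, b := w b + 1)"
    have ab: "a \<noteq> b" using a b by auto
    have "elem_sym I w r \<le> elem_sym I w' r"
      unfolding w'_def using assms(1) a(1) b(1) ab \<open>w b < w a\<close> by (rule elem_sym_transfer)
    also have "elem_sym I w' r \<le> elem_sym I t r"
    proof (rule less.hyps)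
      have "sum w' I + w a + w b = sum w I + (w a - 1) + (w b + 1)"
        unfolding w'_def using assms(1) a(1) b(1) ab by (rule sum_fun_upd2)
      then show "sum w' I = sum t I" using less.prems a by simp
      show "(\<Sum>x\<in>I. w' x - t x) < (\<Sum>x\<in>I. w x - t x)"
        by (rule sum_strict_mono_ex1[OF assms(1)]) (use a b ab in \<open>auto simp: w'_def\<close>)
    qed
    finally show ?thesis .
  qed
qed

section \<open>Cliques of the Turan graph\<close>

lemma card_residue_class:
  fixes n p j :: nat
  assumes "j < p"
  shows "card {x\<in>{..<n}. x mod p = j} = n div p + (if j < n mod p then 1 else 0)"
proof (induction n)
  case (Suc n)
  have "{x\<in>{..<Suc n}. x mod p = j} = {x\<in>{..<n}. x mod p = j} \<union> (if n mod p = j then {n} else {})"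
    by (auto simp: less_Suc_eq)
  then have step: "card {x\<in>{..<Suc n}. x mod p = j}
      = card {x\<in>{..<n}. x mod p = j} + (if n mod p = j then 1 else 0)"
    by auto
  show ?case
  proof (cases "Suc (n mod p) = p")
    case True
    then have "Suc n mod p = 0" "Suc n div p = Suc (n div p)" by (auto simp: mod_Suc div_Suc)
    then show ?thesis using step Suc.IH True assms by auto
  next
    case False
    then have "Suc n mod p = Suc (n mod p)" "Suc n div p = n div p" by (auto simp: mod_Suc div_Suc)
    then show ?thesis using step Suc.IH False assms mod_less_divisor[of p n] by auto
  qed
qed simp

lemma residue_classes_balanced:
  fixes n p :: nat
  assumes "i < p" "j < p"
  shows "card {x\<in>{..<n}. x mod p = j} \<le> card {x\<in>{..<n}. x mod p = i} + 1"
  unfolding card_residue_class[OF assms(1)] card_residue_class[OF assms(2)] by simp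

lemma sum_card_residue_classes:
  fixes n p :: nat
  assumes "0 < p"
  shows "(\<Sum>j<p. card {x\<in>{..<n}. x mod p = j}) = n"
proof -
  have "{..<n} = (\<Union>j<p. {x\<in>{..<n}. x mod p = j})" using assms by auto
  moreover have "card (\<Union>j<p. {x\<in>{..<n}. x mod p = j}) = (\<Sum>j<p. card {x\<in>{..<n}. x mod p = j})"
    by (rule card_UN_disjoint) auto
  ultimately show ?thesis by (metis card_lessThan)
qed

lemma inj_on_subsets_Suc_split:
  assumes "finite A"
  shows "{S. S \<subseteq> A \<and> card S = Suc q \<and> inj_on f S}
    = {S. S \<subseteq> {x\<in>A. f x \<noteq> b} \<and> card S = Suc q \<and> inj_on f S}
      \<union> (\<lambda>(x, T). insert x T) `
          ({x\<in>A. f x = b} \<times> {T. T \<subseteq> {x\<in>A. f x \<noteq> b} \<and> card T = q \<and> inj_on f T})"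
    (is "?L = ?L' \<union> ?g ` (?F \<times> ?L'')")
proof (intro set_eqI iffI)
  fix S assume "S \<in> ?L"
  then have S: "S \<subseteq> A" "card S = Suc q" "inj_on f S" by blast+
  show "S \<in> ?L' \<union> ?g ` (?F \<times> ?L'')"
  proof (cases "\<exists>x\<in>S. f x = b")
    case True
    then obtain x where x: "x \<in> S" "f x = b" by blast
    have "S - {x} \<subseteq> {x\<in>A. f x \<noteq> b}" using S x by (auto simp: inj_on_def)
    moreover have "card (S - {x}) = q" "inj_on f (S - {x})"
      using S x by (auto simp: inj_on_subset)
    ultimately have "(x, S - {x}) \<in> ?F \<times> ?L''" using S x by auto
    moreover have "S = ?g (x, S - {x})" using x by auto
    ultimately show ?thesis by blast
  qed (use S in auto)
next
  fix S assume "S \<in> ?L' \<union> ?g ` (?F \<times> ?L'')"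
  then show "S \<in> ?L"
  proof
    assume "S \<in> ?g ` (?F \<times> ?L'')"
    then obtain x T where xT: "x \<in> ?F" "T \<in> ?L''" "S = insert x T" by auto
    then have "finite T" using assms finite_subset[of T A] by auto
    moreover have "x \<notin> T" "f x \<notin> f ` T" using xT by auto
    ultimately show "S \<in> ?L" using xT by auto
  qed auto
qed

text \<open>Such a set picks \<open>r\<close> distinct fibres and one point in each of them.\<close>

lemma card_inj_on_subsets:
  assumes "finite B" "finite A" "f ` A \<subseteq> B"
  shows "card {S. S \<subseteq> A \<and> card S = r \<and> inj_on f S} = elem_sym B (\<lambda>j. card {x\<in>A. f x = j}) r"
  using assms
proof (induction B arbitrary: A r rule: finite_induct)
  case empty
  then have "{S. S \<subseteq> A \<and> card S = r \<and> inj_on f S} = (if r = 0 then {{}} else {})" by auto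
  then show ?case by (simp add: elem_sym_empty)
next
  case (insert b B)
  define A' where "A' = {x\<in>A. f x \<noteq> b}"
  define F where "F = {x\<in>A. f x = b}"
  let ?L = "\<lambda>r. {S. S \<subseteq> A' \<and> card S = r \<and> inj_on f S}"
  let ?fib = "\<lambda>j. card {x\<in>A. f x = j}"
  have "finite A'" "finite F" "f ` A' \<subseteq> B" using insert.prems by (auto simp: A'_def F_def)
  have L: "card (?L r) = elem_sym B ?fib r" for r
  proof -
    have "card (?L r) = elem_sym B (\<lambda>j. card {x\<in>A'. f x = j}) r"
      using insert.IH \<open>finite A'\<close> \<open>f ` A' \<subseteq> B\<close> .
    also have "\<dots> = elem_sym B ?fib r"
      using insert.hyps(2) by (intro elem_sym_cong) (auto simp: A'_def intro: arg_cong[where f=card])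
    finally show ?thesis .
  qed
  show ?case
  proof (cases r)
    case 0
    have "{S. S \<subseteq> A \<and> card S = r \<and> inj_on f S} = {{}}"
      using 0 insert.prems by (auto dest: finite_subset)
    then show ?thesis using 0 insert.hyps by simp
  next
    case (Suc q)
    let ?g = "\<lambda>(x, T). insert x T"
    have inj: "inj_on ?g (F \<times> ?L q)"
    proof (rule inj_onI)
      fix p1 p2 assume p: "p1 \<in> F \<times> ?L q" "p2 \<in> F \<times> ?L q" "?g p1 = ?g p2"
      obtain x S y T where xy: "p1 = (x, S)" "p2 = (y, T)" by fastforce
      have "x \<notin> S" "y \<notin> T" "x \<notin> T" and e: "insert x S = insert y T"
        using p xy by (auto simp: A'_def F_def)
      then have "x = y" by blast
      then have "S = T" using e \<open>x \<notin> S\<close> \<open>y \<notin> T\<close> by (simp add: insert_ident)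
      then show "p1 = p2" using xy \<open>x = y\<close> by simp
    qed
    have disj: "?L (Suc q) \<inter> ?g ` (F \<times> ?L q) = {}" by (auto simp: A'_def F_def)
    have "card {S. S \<subseteq> A \<and> card S = r \<and> inj_on f S} = card (?L (Suc q) \<union> ?g ` (F \<times> ?L q))"
      unfolding Suc A'_def F_def by (rule arg_cong[where f = card], rule inj_on_subsets_Suc_split[OF insert.prems(1)])
    also have "\<dots> = card (?L (Suc q)) + card F * card (?L q)"
      using \<open>finite A'\<close> \<open>finite F\<close> inj disj
      by (simp add: card_Un_disjoint card_image card_cartesian_product)
    also have "\<dots> = elem_sym (insert b B) ?fib r"
      using Suc insert.hyps by (simp add: L elem_sym_insert F_def)
    finally show ?thesis .
  qed
qed

lemma turan_edge_iff:
  assumes "x < n" "y < n"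
  shows "{x, y} \<in> turan n p \<longleftrightarrow> x mod p \<noteq> y mod p"
  using assms by (auto simp: turan_def doubleton_eq_iff)

lemma num_cliques_turan:
  "num_cliques n r (turan n p) = card {S. S \<subseteq> {..<n} \<and> card S = r \<and> inj_on (\<lambda>x. x mod p) S}"
proof -
  have "(\<forall>x\<in>S. \<forall>y\<in>S. x \<noteq> y \<longrightarrow> {x, y} \<in> turan n p) \<longleftrightarrow> inj_on (\<lambda>x. x mod p) S"
    if "S \<subseteq> {..<n}" for S
    using that unfolding inj_on_def by (auto simp: turan_edge_iff subset_iff)
  then show ?thesis unfolding num_cliques_def by (metis (lifting))
qed

lemma num_cliques_turan_elem_sym:
  assumes "0 < p"
  shows "num_cliques n r (turan n p) = elem_sym {..<p} (\<lambda>j. card {x\<in>{..<n}. x mod p = j}) r"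
  unfolding num_cliques_turan by (rule card_inj_on_subsets) (use assms in auto)

text \<open>The weights are moved injectively into the \<open>p\<close> residue classes, padded with zeros,
  and then balanced.\<close>

lemma elem_sym_le_num_cliques_turan:
  assumes "finite P" "card P \<le> p" "0 < p" "sum s P = n"
  shows "elem_sym P s r \<le> num_cliques n r (turan n p)"
proof -
  let ?t = "\<lambda>j. card {x\<in>{..<n}. x mod p = j}"
  obtain h where h: "h ` P \<subseteq> {..<p}" "inj_on h P"
    using card_le_inj[of P "{..<p}"] assms(1,2) by auto
  define w where "w j = (if j \<in> h ` P then s (inv_into P h j) else 0)" for j
  have w_h: "w (h x) = s x" if "x \<in> P" for x using that h(2) by (simp add: w_def)
  have "elem_sym P s r = elem_sym P (w \<circ> h) r" by (rule elem_sym_cong) (simp add: w_h)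
  also have "\<dots> = elem_sym (h ` P) w r" by (rule elem_sym_reindex[symmetric, OF h(2)])
  also have "\<dots> = elem_sym (h ` P \<union> ({..<p} - h ` P)) w r"
    by (rule elem_sym_zero_extend[symmetric]) (auto simp: w_def assms(1))
  also have "h ` P \<union> ({..<p} - h ` P) = {..<p}" using h(1) by auto
  also have "elem_sym {..<p} w r \<le> elem_sym {..<p} ?t r"
  proof (rule elem_sym_le_balanced)
    show "\<forall>x\<in>{..<p}. \<forall>y\<in>{..<p}. ?t y \<le> ?t x + 1"
      using residue_classes_balanced by blast
    have "sum w {..<p} = sum w (h ` P)"
      by (rule sum.mono_neutral_right) (use h(1) in \<open>auto simp: w_def\<close>)
    also have "\<dots> = sum (w \<circ> h) P" by (rule sum.reindex[OF h(2)])
    also have "\<dots> = n" using assms(4) w_h by simp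
    finally show "sum w {..<p} = sum ?t {..<p}" using sum_card_residue_classes[OF assms(3)] by simp
  qed simp
  also have "\<dots> = num_cliques n r (turan n p)" by (rule num_cliques_turan_elem_sym[symmetric, OF assms(3)])
  finally show ?thesis .
qed

lemma turan_is_graph: "is_graph n (turan n p)"
  by (auto simp: is_graph_def turan_def card_insert_if)

lemma turan_Km_free:
  assumes "0 < p"
  shows "Km_free n (Suc p) (turan n p)"
proof -
  have "\<not> inj_on (\<lambda>x. x mod p) S" if "card S = Suc p" for S :: "nat set"
  proof
    assume "inj_on (\<lambda>x. x mod p) S"
    then have "card ((\<lambda>x. x mod p) ` S) = Suc p" using that card_image by metis
    moreover have "(\<lambda>x. x mod p) ` S \<subseteq> {..<p}" using assms by auto
    ultimately show False by (metis card_lessThan card_mono finite_lessThan not_less_eq_eq order_refl)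
  qed
  then show ?thesis unfolding Km_free_def num_cliques_turan by auto
qed

section \<open>Weighted monochromatic clique counts\<close>

definition cliques_in :: "'a set \<Rightarrow> 'a set set \<Rightarrow> nat \<Rightarrow> 'a set set" where
  "cliques_in A G r = {S. S \<subseteq> A \<and> card S = r \<and> clique S G}"

text \<open>Giving vertex \<open>x\<close> the weight \<open>s x\<close> amounts to blowing it up into \<open>s x\<close> independent
  twins; \<open>weighted_col_count\<close> counts the monochromatic cliques of that blow-up.\<close>

definition weighted_col_count ::
  "nat \<Rightarrow> (nat \<Rightarrow> nat) \<Rightarrow> 'a set set \<Rightarrow> ('a set \<Rightarrow> nat) \<Rightarrow> ('a \<Rightarrow> nat) \<Rightarrow> 'a set \<Rightarrow> nat" where
  "weighted_col_count k r E c s A = (\<Sum>i=1..k. \<Sum>S\<in>cliques_in A {e\<in>E. c e = i} (r i). \<Prod>x\<in>S. s x)"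

lemma finite_cliques_in [simp]: "finite A \<Longrightarrow> finite (cliques_in A G r)"
  unfolding cliques_in_def by (rule finite_subset[of _ "Pow A"]) auto

lemma col_count_eq_weighted_col_count:
  "col_count n k r E c = weighted_col_count k r E c (\<lambda>_. 1) {..<n}"
  by (simp add: col_count_def weighted_col_count_def num_cliques_def cliques_in_def clique_def)

lemma weighted_col_count_cong:
  assumes "\<forall>x\<in>A. s x = s' x" "\<forall>e\<in>[A]\<^bsup>2\<^esup>. c e = c' e"
  shows "weighted_col_count k r E c s A = weighted_col_count k r E c' s' A"
proof -
  have "cliques_in A {e\<in>E. c e = i} q = cliques_in A {e\<in>E. c' e = i} q" for i q
    using assms(2) by (auto simp: cliques_in_def clique_def subset_iff)
  moreover have "prod s S = prod s' S" if "S \<in> cliques_in A G q" for S G q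
    using that assms(1) by (auto simp: cliques_in_def intro: prod.cong)
  ultimately show ?thesis unfolding weighted_col_count_def by (auto intro!: sum.cong)
qed

lemma weighted_col_count_restrict:
  assumes "finite A" "P \<subseteq> A" "\<forall>x\<in>A - P. s x = 0"
  shows "weighted_col_count k r E c s A = weighted_col_count k r E c s P"
  unfolding weighted_col_count_def
proof (rule sum.cong[OF refl], rule sum.mono_neutral_right)
  fix i
  show "finite (cliques_in A {e\<in>E. c e = i} (r i))" using assms(1) by simp
  show "cliques_in P {e\<in>E. c e = i} (r i) \<subseteq> cliques_in A {e\<in>E. c e = i} (r i)"
    using assms(2) by (auto simp: cliques_in_def)
  show "\<forall>S\<in>cliques_in A {e\<in>E. c e = i} (r i) - cliques_in P {e\<in>E. c e = i} (r i). prod s S = 0"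
  proof
    fix S assume S: "S \<in> cliques_in A {e\<in>E. c e = i} (r i) - cliques_in P {e\<in>E. c e = i} (r i)"
    then obtain x where "x \<in> S" "x \<in> A - P" by (auto simp: cliques_in_def)
    moreover have "finite S" using S assms(1) finite_subset by (auto simp: cliques_in_def)
    ultimately show "prod s S = 0" using assms(3) by (auto intro: prod_zero)
  qed
qed

lemma weighted_col_count_clique:
  assumes "clique P E"
  shows "weighted_col_count k r E c s P = weighted_col_count k r UNIV c s P"
proof -
  have "cliques_in P {e\<in>E. c e = i} q = cliques_in P {e\<in>UNIV. c e = i} q" for i q
    using assms by (auto simp: cliques_in_def clique_def)
  then show ?thesis unfolding weighted_col_count_def by simp
qed

lemma prod_merge_weights:
  fixes s :: "'a \<Rightarrow> nat"
  assumes "finite S" "u \<noteq> v" "\<not> (u \<in> S \<and> v \<in> S)"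
  shows "s u * prod (s(u := s u + s v, v := 0)) S + s v * prod (s(v := s u + s v, u := 0)) S
    = (s u + s v) * prod s S"
proof -
  have remove: "prod f S = f a * prod s (S - {a})" if "a \<in> S" "\<forall>x\<in>S - {a}. f x = s x" for f a
    using prod.remove[OF assms(1) that(1), of f] prod.cong[OF refl, of "S - {a}" f s] that(2) by simp
  consider "u \<in> S" "v \<notin> S" | "v \<in> S" "u \<notin> S" | "u \<notin> S" "v \<notin> S" using assms(3) by blast
  then show ?thesis
  proof cases
    case 1
    then show ?thesis
      using remove[OF 1(1), of "s(u := s u + s v, v := 0)"] remove[OF 1(1), of "s(v := s u + s v, u := 0)"]
        remove[OF 1(1), of s] assms(2)
      by (auto simp: algebra_simps)
  next
    case 2
    then show ?thesis
      using remove[OF 2(1), of "s(u := s u + s v, v := 0)"] remove[OF 2(1), of "s(v := s u + s v, u := 0)"]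
        remove[OF 2(1), of s] assms(2)
      by (auto simp: algebra_simps)
  next
    case 3
    then have "prod (s(u := s u + s v, v := 0)) S = prod s S" "prod (s(v := s u + s v, u := 0)) S = prod s S"
      by (auto intro: prod.cong)
    then show ?thesis by (simp add: algebra_simps)
  qed
qed

text \<open>Zykov symmetrisation: the weighted count is linear in the weights of two
  non-adjacent vertices, since no clique contains both.\<close>

lemma weighted_col_count_merge:
  fixes s :: "'a \<Rightarrow> nat"
  assumes "u \<noteq> v" "{u, v} \<notin> E"
  shows "s u * weighted_col_count k r E c (s(u := s u + s v, v := 0)) A
       + s v * weighted_col_count k r E c (s(v := s u + s v, u := 0)) A
     = (s u + s v) * weighted_col_count k r E c s A"
proof -
  have "s u * prod (s(u := s u + s v, v := 0)) S + s v * prod (s(v := s u + s v, u := 0)) S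
      = (s u + s v) * prod s S" if "S \<in> cliques_in A {e\<in>E. c e = i} (r i)" for i S
  proof (cases "finite S")
    case True
    have "\<not> (u \<in> S \<and> v \<in> S)" using that assms by (auto simp: cliques_in_def clique_def)
    then show ?thesis by (rule prod_merge_weights[OF True assms(1)])
  qed simp
  then show ?thesis
    unfolding weighted_col_count_def sum_distrib_left sum.distrib[symmetric]
    by (intro sum.cong refl) auto
qed

lemma weighted_mean_le_either:
  fixes a b x y z :: nat
  assumes "(a + b) * z = a * x + b * y" "0 < a + b"
  shows "z \<le> x \<or> z \<le> y"
proof (rule ccontr)
  assume "\<not> (z \<le> x \<or> z \<le> y)"
  then have "x < z" "y < z" by auto
  then have "a * x + b * y < a * z + b * z"
    using assms(2) by (cases "a = 0") (auto intro: add_less_le_mono mult_strict_left_mono)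
  then show False using assms(1) by (simp add: algebra_simps)
qed

lemma merge_nonadjacent_weights:
  fixes s :: "'a \<Rightarrow> nat"
  assumes "finite A" "u \<in> A" "v \<in> A" "u \<noteq> v" "0 < s u" "0 < s v" "{u, v} \<notin> E"
  shows "\<exists>t. sum t A = sum s A \<and> weighted_col_count k r E c s A \<le> weighted_col_count k r E c t A
    \<and> {x\<in>A. 0 < t x} \<subset> {x\<in>A. 0 < s x}"
proof -
  define s1 where "s1 = s(u := s u + s v, v := 0)"
  define s2 where "s2 = s(v := s u + s v, u := 0)"
  have "(s u + s v) * weighted_col_count k r E c s A
      = s u * weighted_col_count k r E c s1 A + s v * weighted_col_count k r E c s2 A"
    unfolding s1_def s2_def by (rule weighted_col_count_merge[OF assms(4,7), symmetric])
  then have mean: "weighted_col_count k r E c s A \<le> weighted_col_count k r E c s1 A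
      \<or> weighted_col_count k r E c s A \<le> weighted_col_count k r E c s2 A"
    by (rule weighted_mean_le_either) (use assms(5) in simp)
  have sums: "sum s1 A = sum s A" "sum s2 A = sum s A"
    using sum_fun_upd2[OF assms(1-4), of s "s u + s v" 0]
      sum_fun_upd2[OF assms(1,3,2) assms(4)[symmetric], of s "s u + s v" 0]
    by (simp_all add: s1_def s2_def)
  have "{x\<in>A. 0 < s1 x} = {x\<in>A. 0 < s x} - {v}" "{x\<in>A. 0 < s2 x} = {x\<in>A. 0 < s x} - {u}"
    using assms(2-6) by (auto simp: s1_def s2_def)
  moreover have "{x\<in>A. 0 < s x} - {y} \<subset> {x\<in>A. 0 < s x}" if "y \<in> {u, v}" for y
    using that assms(2,3,5,6) by auto
  ultimately have supports: "{x\<in>A. 0 < s1 x} \<subset> {x\<in>A. 0 < s x}" "{x\<in>A. 0 < s2 x} \<subset> {x\<in>A. 0 < s x}"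
    by simp_all
  show ?thesis
    using mean
  proof
    assume "weighted_col_count k r E c s A \<le> weighted_col_count k r E c s1 A"
    then show ?thesis using sums(1) supports(1) by blast
  next
    assume "weighted_col_count k r E c s A \<le> weighted_col_count k r E c s2 A"
    then show ?thesis using sums(2) supports(2) by blast
  qed
qed

lemma exists_clique_supported_weighting:
  fixes s :: "'a \<Rightarrow> nat"
  assumes "finite A"
  shows "\<exists>s'. sum s' A = sum s A \<and> weighted_col_count k r E c s A \<le> weighted_col_count k r E c s' A
    \<and> clique {x\<in>A. 0 < s' x} E"
proof (induction "card {x\<in>A. 0 < s x}" arbitrary: s rule: less_induct)
  case less
  show ?case
  proof (cases "clique {x\<in>A. 0 < s x} E")
    case False
    then obtain u v where uv: "u \<in> A" "v \<in> A" "u \<noteq> v" "0 < s u" "0 < s v" "{u, v} \<notin> E"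
      by (auto simp: clique_def)
    obtain t where t: "sum t A = sum s A"
        "weighted_col_count k r E c s A \<le> weighted_col_count k r E c t A"
        "{x\<in>A. 0 < t x} \<subset> {x\<in>A. 0 < s x}"
      using merge_nonadjacent_weights[OF assms uv] by blast
    have "card {x\<in>A. 0 < t x} < card {x\<in>A. 0 < s x}"
      using t(3) by (intro psubset_card_mono) (simp_all add: assms)
    then obtain s' where "sum s' A = sum t A" "clique {x\<in>A. 0 < s' x} E"
        "weighted_col_count k r E c t A \<le> weighted_col_count k r E c s' A"
      using less.hyps[of t] by auto
    then show ?thesis using t(1,2) by (intro exI[of _ s']) simp
  qed (intro exI[of _ s], simp)
qed

section \<open>Copying colours\<close>

definition copy_colors :: "'a set \<Rightarrow> 'a \<Rightarrow> 'a \<Rightarrow> ('a set \<Rightarrow> nat) \<Rightarrow> 'a set \<Rightarrow> nat" where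
  "copy_colors P a b c = (\<lambda>e\<in>[P]\<^bsup>2\<^esup>. if a \<in> e \<and> b \<notin> e then c (insert b (e - {a})) else c e)"

lemma copy_colors_doubleton:
  assumes "u \<in> P" "v \<in> P" "u \<noteq> v" "a \<noteq> b"
  shows "copy_colors P a b c {u, v}
    = (if u = a \<and> v \<noteq> b then c {b, v} else if v = a \<and> u \<noteq> b then c {b, u} else c {u, v})"
  using assms by (auto simp: copy_colors_def insert_Diff_if insert_commute)

lemma copy_colors_PiE:
  assumes "c \<in> [P]\<^bsup>2\<^esup> \<rightarrow>\<^sub>E X" "a \<in> P" "b \<in> P" "a \<noteq> b"
  shows "copy_colors P a b c \<in> [P]\<^bsup>2\<^esup> \<rightarrow>\<^sub>E X"
  unfolding copy_colors_def restrict_PiE_iff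
proof
  fix e assume e: "e \<in> [P]\<^bsup>2\<^esup>"
  then obtain x y where xy: "e = {x, y}" "x \<in> P" "y \<in> P" "x \<noteq> y" by (rule nsets2_E)
  have "insert b (e - {a}) \<in> [P]\<^bsup>2\<^esup>" if "a \<in> e" "b \<notin> e"
    using that xy assms(3) by (auto simp: insert_Diff_if)
  then show "(if a \<in> e \<and> b \<notin> e then c (insert b (e - {a})) else c e) \<in> X"
    using e assms(1) by auto
qed

lemma copy_colors_keeps_clique:
  assumes "S \<in> cliques_in P {e. c e = i} r" "a \<noteq> b" "a \<in> S \<longrightarrow> b \<in> S"
  shows "S \<in> cliques_in P {e. copy_colors P a b c e = i} r"
proof -
  have S: "S \<subseteq> P" "\<And>x y. x \<in> S \<Longrightarrow> y \<in> S \<Longrightarrow> x \<noteq> y \<Longrightarrow> c {x, y} = i"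
    using assms(1) by (auto simp: cliques_in_def clique_def)
  have "copy_colors P a b c {x, y} = i" if "x \<in> S" "y \<in> S" "x \<noteq> y" for x y
    using that S assms(2,3) by (auto simp: copy_colors_doubleton subset_iff)
  then show ?thesis using assms(1) by (auto simp: cliques_in_def clique_def)
qed

lemma copy_colors_bij_cliques:
  assumes "finite P" "a \<in> P" "b \<in> P" "a \<noteq> b"
  shows "bij_betw (\<lambda>S. insert b (S - {a}))
    (cliques_in P {e. copy_colors P a b c e = i} r \<inter> {S. a \<in> S \<and> b \<notin> S})
    (cliques_in P {e. c e = i} r \<inter> {S. b \<in> S \<and> a \<notin> S})"
proof (rule bij_betw_byWitness[where f' = "\<lambda>T. insert a (T - {b})"])
  have card_swap: "card (insert y (S - {x})) = card S" if "S \<subseteq> P" "x \<in> S" "y \<notin> S" for S x y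
  proof -
    have "finite S" using that(1) assms(1) finite_subset by blast
    then have "0 < card S" using that(2) card_gt_0_iff by blast
    then show ?thesis using \<open>finite S\<close> that(2,3) by simp
  qed
  show "(\<lambda>S. insert b (S - {a})) ` (cliques_in P {e. copy_colors P a b c e = i} r \<inter> {S. a \<in> S \<and> b \<notin> S})
      \<subseteq> cliques_in P {e. c e = i} r \<inter> {S. b \<in> S \<and> a \<notin> S}"
  proof clarify
    fix S assume S: "S \<in> cliques_in P {e. copy_colors P a b c e = i} r" "a \<in> S" "b \<notin> S"
    then have sub: "S \<subseteq> P"
      and cl: "\<And>x y. x \<in> S \<Longrightarrow> y \<in> S \<Longrightarrow> x \<noteq> y \<Longrightarrow> copy_colors P a b c {x, y} = i"
      by (auto simp: cliques_in_def clique_def)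
    have "c {x, y} = i" if "x \<in> insert b (S - {a})" "y \<in> insert b (S - {a})" "x \<noteq> y" for x y
      using that cl[of a y] cl[of a x] cl[of x y] sub assms(2-4) S(2,3)
      by (auto simp: copy_colors_doubleton subset_iff insert_commute)
    then show "insert b (S - {a}) \<in> cliques_in P {e. c e = i} r \<inter> {S. b \<in> S \<and> a \<notin> S}"
      using S sub assms(3) card_swap[OF sub S(2,3)] by (auto simp: cliques_in_def clique_def)
  qed
  show "(\<lambda>T. insert a (T - {b})) ` (cliques_in P {e. c e = i} r \<inter> {S. b \<in> S \<and> a \<notin> S})
      \<subseteq> cliques_in P {e. copy_colors P a b c e = i} r \<inter> {S. a \<in> S \<and> b \<notin> S}"
  proof clarify
    fix T assume T: "T \<in> cliques_in P {e. c e = i} r" "b \<in> T" "a \<notin> T"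
    then have sub: "T \<subseteq> P" and cl: "\<And>x y. x \<in> T \<Longrightarrow> y \<in> T \<Longrightarrow> x \<noteq> y \<Longrightarrow> c {x, y} = i"
      by (auto simp: cliques_in_def clique_def)
    have "copy_colors P a b c {x, y} = i" if "x \<in> insert a (T - {b})" "y \<in> insert a (T - {b})" "x \<noteq> y" for x y
      using that cl[of b y] cl[of b x] cl[of x y] sub assms(2-4) T(2,3)
      by (auto simp: copy_colors_doubleton subset_iff)
    then show "insert a (T - {b}) \<in> cliques_in P {e. copy_colors P a b c e = i} r \<inter> {S. a \<in> S \<and> b \<notin> S}"
      using T sub assms(2,4) card_swap[OF sub T(2,3)] by (auto simp: cliques_in_def clique_def)
  qed
qed auto

lemma sum_cliques_copy_colors_ge:
  fixes s :: "'a \<Rightarrow> nat"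
  assumes "finite P" "a \<in> P" "b \<in> P" "a \<noteq> b"
  shows "s b * (\<Sum>S\<in>cliques_in P {e. c e = i} r - {S. a \<in> S \<and> b \<notin> S}. prod s S)
       + s a * (\<Sum>S\<in>cliques_in P {e. c e = i} r \<inter> {S. b \<in> S \<and> a \<notin> S}. prod s S)
     \<le> s b * (\<Sum>S\<in>cliques_in P {e. copy_colors P a b c e = i} r. prod s S)"
proof -
  let ?K = "cliques_in P {e. c e = i} r"
  let ?K' = "cliques_in P {e. copy_colors P a b c e = i} r"
  let ?X = "{S. a \<in> S \<and> b \<notin> S}"
  have swap_weight: "s b * prod s S = s a * prod s (insert b (S - {a}))" if "S \<in> ?K' \<inter> ?X" for S
  proof -
    have "finite S" "a \<in> S" "b \<notin> S" using that assms(1) finite_subset by (auto simp: cliques_in_def)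
    then show ?thesis by (simp add: prod.remove[of S a] mult.left_commute)
  qed
  have reindex: "(\<Sum>S\<in>?K' \<inter> ?X. prod s (insert b (S - {a}))) = (\<Sum>S\<in>?K \<inter> {S. b \<in> S \<and> a \<notin> S}. prod s S)"
    by (rule sum.reindex_bij_betw[OF copy_colors_bij_cliques[OF assms]])
  have "s b * (\<Sum>S\<in>?K' \<inter> ?X. prod s S) = s a * (\<Sum>S\<in>?K' \<inter> ?X. prod s (insert b (S - {a})))"
    unfolding sum_distrib_left by (intro sum.cong refl) (rule swap_weight)
  then have swapped: "s b * (\<Sum>S\<in>?K' \<inter> ?X. prod s S) = s a * (\<Sum>S\<in>?K \<inter> {S. b \<in> S \<and> a \<notin> S}. prod s S)"
    unfolding reindex .
  have "?K - ?X \<subseteq> ?K' - ?X" using copy_colors_keeps_clique[OF _ assms(4)] by blast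
  then have "(\<Sum>S\<in>?K - ?X. prod s S) \<le> (\<Sum>S\<in>?K' - ?X. prod s S)"
    using assms(1) by (intro sum_mono2) auto
  moreover have "(\<Sum>S\<in>?K'. prod s S) = (\<Sum>S\<in>?K' \<inter> ?X. prod s S) + (\<Sum>S\<in>?K' - ?X. prod s S)"
    using assms(1) by (simp add: sum.Int_Diff)
  ultimately show ?thesis using swapped by (simp add: algebra_simps)
qed

lemma weighted_col_count_copy_colors_mean:
  fixes s :: "'a \<Rightarrow> nat"
  assumes "finite P" "a \<in> P" "b \<in> P" "a \<noteq> b"
  shows "(s a + s b) * weighted_col_count k r UNIV c s P
    \<le> s b * weighted_col_count k r UNIV (copy_colors P a b c) s P
      + s a * weighted_col_count k r UNIV (copy_colors P b a c) s P"
proof -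
  have "(s a + s b) * (\<Sum>S\<in>cliques_in P {e. c e = i} q. prod s S)
      \<le> s b * (\<Sum>S\<in>cliques_in P {e. copy_colors P a b c e = i} q. prod s S)
        + s a * (\<Sum>S\<in>cliques_in P {e. copy_colors P b a c e = i} q. prod s S)" for i q
  proof -
    let ?K = "cliques_in P {e. c e = i} q"
    let ?\<Sigma> = "\<lambda>A. \<Sum>S\<in>A. prod s S"
    have "finite ?K" using assms(1) by simp
    then have "s b * ?\<Sigma> ?K = s b * ?\<Sigma> (?K \<inter> {S. a \<in> S \<and> b \<notin> S}) + s b * ?\<Sigma> (?K - {S. a \<in> S \<and> b \<notin> S})"
      and "s a * ?\<Sigma> ?K = s a * ?\<Sigma> (?K \<inter> {S. b \<in> S \<and> a \<notin> S}) + s a * ?\<Sigma> (?K - {S. b \<in> S \<and> a \<notin> S})"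
      by (simp_all only: sum.Int_Diff[OF \<open>finite ?K\<close>, symmetric] distrib_left[symmetric])
    moreover have "(s a + s b) * ?\<Sigma> ?K = s a * ?\<Sigma> ?K + s b * ?\<Sigma> ?K" by (rule distrib_right)
    ultimately show ?thesis
      using sum_cliques_copy_colors_ge[OF assms, where c = c and i = i and r = q and s = s]
        sum_cliques_copy_colors_ge[OF assms(1,3,2) assms(4)[symmetric], where c = c and i = i and r = q and s = s]
      by linarith
  qed
  then show ?thesis
    unfolding weighted_col_count_def sum_distrib_left sum.distrib[symmetric]
    by (auto intro: sum_mono)
qed

lemma copy_closed_star:
  assumes "finite P" "a0 \<in> P" "a1 \<in> P" "a0 \<noteq> a1" "c \<in> G"
    and closed: "\<And>c a b. c \<in> G \<Longrightarrow> a \<in> P \<Longrightarrow> b \<in> P \<Longrightarrow> a \<noteq> b \<Longrightarrow> copy_colors P a b c \<in> G"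
  shows "\<exists>c\<in>G. \<forall>y\<in>P - {a1}. c {a1, y} = c {a0, a1}"
  using assms(5)
proof (induction "card P - card {y\<in>P - {a1}. c {a1, y} = c {a0, a1}}" arbitrary: c rule: less_induct)
  case less
  show ?case
  proof (cases "\<forall>y\<in>P - {a1}. c {a1, y} = c {a0, a1}")
    case False
    then obtain y where y: "y \<in> P" "y \<noteq> a1" "c {a1, y} \<noteq> c {a0, a1}" by blast
    then have "y \<noteq> a0" by (auto simp: insert_commute)
    define c' where "c' = copy_colors P y a0 c"
    have c'_G: "c' \<in> G" unfolding c'_def using less.prems y(1) assms(2) \<open>y \<noteq> a0\<close> by (rule closed)
    have c'_a0a1: "c' {a0, a1} = c {a0, a1}"
      using assms(2-4) y \<open>y \<noteq> a0\<close> by (simp add: c'_def copy_colors_doubleton)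
    have c'_a1: "c' {a1, z} = (if z = y then c {a0, a1} else c {a1, z})" if "z \<in> P" "z \<noteq> a1" for z
      using that assms(2-4) y \<open>y \<noteq> a0\<close> by (auto simp: c'_def copy_colors_doubleton insert_commute)
    have "{z\<in>P - {a1}. c {a1, z} = c {a0, a1}} \<subset> {z\<in>P - {a1}. c' {a1, z} = c' {a0, a1}}"
      using y c'_a0a1 c'_a1 by auto
    then have "card {z\<in>P - {a1}. c {a1, z} = c {a0, a1}} < card {z\<in>P - {a1}. c' {a1, z} = c' {a0, a1}}"
      using assms(1) by (auto intro: psubset_card_mono)
    moreover have "card {z\<in>P - {a1}. c' {a1, z} = c' {a0, a1}} \<le> card P"
      using assms(1) by (auto intro: card_mono)
    ultimately show ?thesis using less.hyps[OF _ c'_G] by auto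
  qed (use less.prems in blast)
qed

lemma copy_closed_monochromatic:
  assumes "finite P" "a1 \<in> P" "c \<in> G" "\<forall>y\<in>P - {a1}. c {a1, y} = g"
    and closed: "\<And>c a b. c \<in> G \<Longrightarrow> a \<in> P \<Longrightarrow> b \<in> P \<Longrightarrow> a \<noteq> b \<Longrightarrow> copy_colors P a b c \<in> G"
  shows "\<exists>c\<in>G. \<forall>e\<in>[P]\<^bsup>2\<^esup>. c e = g"
  using assms(3,4)
proof (induction "card ([P]\<^bsup>2\<^esup>) - card {e\<in>[P]\<^bsup>2\<^esup>. c e = g}" arbitrary: c rule: less_induct)
  case less
  show ?case
  proof (cases "\<forall>e\<in>[P]\<^bsup>2\<^esup>. c e = g")
    case False
    then obtain e where e: "e \<in> [P]\<^bsup>2\<^esup>" "c e \<noteq> g" by blast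
    from e(1) obtain x y where xy: "e = {x, y}" "x \<in> P" "y \<in> P" "x \<noteq> y" by (rule nsets2_E)
    have "x \<noteq> a1" using less.prems(2) xy e(2) by auto
    have "y \<noteq> a1"
    proof
      assume "y = a1"
      then have "c {y, x} = g" using less.prems(2) xy by auto
      then show False using xy(1) e(2) by (simp add: insert_commute)
    qed
    define c' where "c' = copy_colors P x a1 c"
    have c'_G: "c' \<in> G" unfolding c'_def using less.prems(1) xy(2) assms(2) \<open>x \<noteq> a1\<close> by (rule closed)
    have c'_uv: "c' {u, v} = (if u = x \<and> v \<noteq> a1 then c {a1, v} else if v = x \<and> u \<noteq> a1 then c {a1, u}
        else c {u, v})" if "u \<in> P" "v \<in> P" "u \<noteq> v" for u v
      unfolding c'_def using that \<open>x \<noteq> a1\<close> by (rule copy_colors_doubleton)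
    have c'_star: "\<forall>z\<in>P - {a1}. c' {a1, z} = g"
      using less.prems(2) assms(2) c'_uv[of a1] \<open>x \<noteq> a1\<close> by auto
    have "{e\<in>[P]\<^bsup>2\<^esup>. c e = g} \<subset> {e\<in>[P]\<^bsup>2\<^esup>. c' e = g}"
    proof
      show "{e\<in>[P]\<^bsup>2\<^esup>. c e = g} \<subseteq> {e\<in>[P]\<^bsup>2\<^esup>. c' e = g}"
        using less.prems(2) c'_uv by (auto elim!: nsets2_E simp: insert_commute)
      show "{e\<in>[P]\<^bsup>2\<^esup>. c e = g} \<noteq> {e\<in>[P]\<^bsup>2\<^esup>. c' e = g}"
        using e xy \<open>y \<noteq> a1\<close> less.prems(2) c'_uv by auto
    qed
    then have "card {e\<in>[P]\<^bsup>2\<^esup>. c e = g} < card {e\<in>[P]\<^bsup>2\<^esup>. c' e = g}"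
      by (rule psubset_card_mono[rotated]) (simp add: assms(1) finite_imp_finite_nsets)
    moreover have "card {e\<in>[P]\<^bsup>2\<^esup>. c' e = g} \<le> card ([P]\<^bsup>2\<^esup>)"
      by (rule card_mono) (auto simp: assms(1) finite_imp_finite_nsets)
    ultimately show ?thesis using less.hyps[OF _ c'_G c'_star] by auto
  qed (use less.prems in blast)
qed

lemma mean_ge_bound_imp_eq:
  fixes a b x y z :: nat
  assumes "(a + b) * z \<le> b * x + a * y" "x \<le> z" "y \<le> z" "0 < b"
  shows "x = z"
proof (rule ccontr)
  assume "x \<noteq> z"
  then have "b * x < b * z" using assms(2,4) by simp
  moreover have "a * y \<le> a * z" using assms(3) by simp
  ultimately show False using assms(1) distrib_right[of a b z] by linarith
qed

lemma ex_two_elements: "2 \<le> card S \<Longrightarrow> \<exists>x\<in>S. \<exists>y\<in>S. x \<noteq> y"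
  using card_le_Suc0_iff_eq[of S] by (cases "finite S") auto

lemma weighted_col_count_monochromatic:
  assumes "g \<in> {1..k}" "\<forall>i\<in>{1..k}. 2 \<le> r i" "\<forall>e\<in>[P]\<^bsup>2\<^esup>. c e = g"
  shows "weighted_col_count k r UNIV c s P = elem_sym P s (r g)"
proof -
  have "cliques_in P {e\<in>UNIV. c e = i} (r i) = (if i = g then {S. S \<subseteq> P \<and> card S = r g} else {})"
    if i: "i \<in> {1..k}" for i
  proof (cases "i = g")
    case True
    then show ?thesis using assms(3) by (auto simp: cliques_in_def clique_def subset_iff)
  next
    case False
    have "\<not> clique S {e. c e = i}" if S: "S \<subseteq> P" "card S = r i" for S
    proof
      assume "clique S {e. c e = i}"
      moreover obtain x y where "x \<in> S" "y \<in> S" "x \<noteq> y"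
        using ex_two_elements[of S] S(2) assms(2) i by auto
      ultimately show False using S(1) assms(3) False by (auto simp: clique_def subset_iff)
    qed
    then show ?thesis using False by (auto simp: cliques_in_def)
  qed
  then have "weighted_col_count k r UNIV c s P = (\<Sum>i=1..k. if i = g then elem_sym P s (r g) else 0)"
    unfolding weighted_col_count_def elem_sym_def by (intro sum.cong) auto
  also have "\<dots> = elem_sym P s (r g)" using assms(1) by simp
  finally show ?thesis .
qed

lemma cliques_in_eq_empty: "finite P \<Longrightarrow> card P < q \<Longrightarrow> cliques_in P G q = {}"
  by (auto simp: cliques_in_def dest: card_mono)

lemma copy_colors_preserves_max:
  fixes s :: "'a \<Rightarrow> nat"
  assumes "finite P" "\<forall>x\<in>P. 0 < s x" "a \<in> P" "b \<in> P" "a \<noteq> b"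
    and c: "c \<in> [P]\<^bsup>2\<^esup> \<rightarrow>\<^sub>E {1..k}"
    and max: "weighted_col_count k r UNIV c s P
      = (MAX c'\<in>[P]\<^bsup>2\<^esup> \<rightarrow>\<^sub>E {1..k}. weighted_col_count k r UNIV c' s P)"
  shows "copy_colors P a b c \<in> [P]\<^bsup>2\<^esup> \<rightarrow>\<^sub>E {1..k}
    \<and> weighted_col_count k r UNIV (copy_colors P a b c) s P
      = (MAX c'\<in>[P]\<^bsup>2\<^esup> \<rightarrow>\<^sub>E {1..k}. weighted_col_count k r UNIV c' s P)"
proof -
  let ?C = "[P]\<^bsup>2\<^esup> \<rightarrow>\<^sub>E {1..k}"
  let ?W = "\<lambda>c. weighted_col_count k r UNIV c s P"
  have fin: "finite ?C" by (simp add: finite_PiE finite_imp_finite_nsets assms(1))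
  have C: "copy_colors P a b c \<in> ?C" "copy_colors P b a c \<in> ?C"
    using copy_colors_PiE[OF c] assms(3-5) by auto
  have "(s a + s b) * Max (?W ` ?C) \<le> s b * ?W (copy_colors P a b c) + s a * ?W (copy_colors P b a c)"
    using weighted_col_count_copy_colors_mean[OF assms(1,3-5), where k = k and r = r and c = c and s = s]
    unfolding max .
  then have "?W (copy_colors P a b c) = Max (?W ` ?C)"
    by (rule mean_ge_bound_imp_eq) (use fin C assms(2,4) in \<open>auto intro: Max_ge\<close>)
  then show ?thesis using C by simp
qed

lemma weighted_col_count_le_elem_sym:
  assumes "finite P" "\<forall>x\<in>P. 0 < s x" "1 \<le> k" "\<forall>i\<in>{1..k}. 2 \<le> r i"
    and colors: "\<forall>e\<in>[P]\<^bsup>2\<^esup>. c e \<in> {1..k}"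
  shows "\<exists>g\<in>{1..k}. weighted_col_count k r UNIV c s P \<le> elem_sym P s (r g)"
proof (cases "card P < 2")
  case True
  have "cliques_in P G (r i) = {}" if "i \<in> {1..k}" for G i
    using True assms(4) that by (intro cliques_in_eq_empty[OF assms(1)]) fastforce
  then have "weighted_col_count k r UNIV c s P = 0" by (simp add: weighted_col_count_def)
  then show ?thesis using assms(3) by auto
next
  case False
  then obtain a0 a1 where a: "a0 \<in> P" "a1 \<in> P" "a0 \<noteq> a1" using ex_two_elements[of P] by auto
  let ?C = "[P]\<^bsup>2\<^esup> \<rightarrow>\<^sub>E {1..k}"
  let ?W = "\<lambda>c. weighted_col_count k r UNIV c s P"
  define G where "G = {c'\<in>?C. ?W c' = Max (?W ` ?C)}"
  have fin: "finite ?C" by (simp add: finite_PiE finite_imp_finite_nsets assms(1))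
  have c_C: "restrict c ([P]\<^bsup>2\<^esup>) \<in> ?C" using colors by simp
  have "?W c = ?W (restrict c ([P]\<^bsup>2\<^esup>))" by (rule weighted_col_count_cong) auto
  also have "\<dots> \<le> Max (?W ` ?C)" using fin c_C by (intro Max_ge) auto
  finally have W_c: "?W c \<le> Max (?W ` ?C)" .
  have "?C \<noteq> {}" using c_C by blast
  then have "Max (?W ` ?C) \<in> ?W ` ?C" using fin by (intro Max_in) auto
  then obtain c0 where "c0 \<in> G" unfolding G_def by auto
  have closed: "copy_colors P a b c' \<in> G" if "c' \<in> G" "a \<in> P" "b \<in> P" "a \<noteq> b" for c' a b
    using copy_colors_preserves_max[OF assms(1,2) that(2-4), where c = c' and k = k and r = r] that(1)
    by (simp add: G_def)
  obtain c1 where "c1 \<in> G" "\<forall>y\<in>P - {a1}. c1 {a1, y} = c1 {a0, a1}"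
    using copy_closed_star[OF assms(1) a \<open>c0 \<in> G\<close> closed] by blast
  then obtain cm where cm: "cm \<in> G" "\<forall>e\<in>[P]\<^bsup>2\<^esup>. cm e = c1 {a0, a1}"
    using copy_closed_monochromatic[OF assms(1) a(2) _ _ closed] by blast
  have edge: "{a0, a1} \<in> [P]\<^bsup>2\<^esup>" using a by simp
  then have "cm {a0, a1} \<in> {1..k}" using cm(1) unfolding G_def by (blast dest: PiE_mem)
  then have g: "c1 {a0, a1} \<in> {1..k}" using cm(2) edge by simp
  have "?W cm = elem_sym P s (r (c1 {a0, a1}))"
    by (rule weighted_col_count_monochromatic[OF g assms(4) cm(2)])
  then have "?W c \<le> elem_sym P s (r (c1 {a0, a1}))" using W_c cm(1) by (simp add: G_def)
  then show ?thesis using g by blast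
qed

section \<open>The coloured Turan number\<close>

lemma clique_card_less_if_Km_free:
  assumes "Km_free n m E" "P \<subseteq> {..<n}" "clique P E"
  shows "card P < m"
proof (rule ccontr)
  assume "\<not> card P < m"
  then obtain S where S: "S \<subseteq> P" "card S = m"
    using obtain_subset_with_card_n[of m P] by (metis not_less)
  then have "S \<in> {S. S \<subseteq> {..<n} \<and> card S = m \<and> (\<forall>x\<in>S. \<forall>y\<in>S. x \<noteq> y \<longrightarrow> {x, y} \<in> E)}"
    using assms(2,3) smaller_clique[OF assms(3) S(1)] by (auto simp: clique_def)
  moreover have "finite {S. S \<subseteq> {..<n} \<and> card S = m \<and> (\<forall>x\<in>S. \<forall>y\<in>S. x \<noteq> y \<longrightarrow> {x, y} \<in> E)}"
    by (rule finite_subset[of _ "Pow {..<n}"]) auto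
  ultimately have "num_cliques n m E \<noteq> 0" unfolding num_cliques_def by (auto simp: card_eq_0_iff)
  then show False using assms(1) by (simp add: Km_free_def)
qed

lemma col_count_le_num_cliques_turan:
  assumes "Km_free n m E" "\<forall>e\<in>E. c e \<in> {1..k}" "2 \<le> m" "1 \<le> k" "\<forall>i\<in>{1..k}. 2 \<le> r i"
  shows "\<exists>g\<in>{1..k}. col_count n k r E c \<le> num_cliques n (r g) (turan n (m - 1))"
proof -
  have "\<exists>s. sum s {..<n} = n
      \<and> weighted_col_count k r E c (\<lambda>_. 1) {..<n} \<le> weighted_col_count k r E c s {..<n}
      \<and> clique {x\<in>{..<n}. 0 < s x} E"
    using exists_clique_supported_weighting[where A = "{..<n}" and s = "\<lambda>_. 1"] by simp
  then obtain s where s: "sum s {..<n} = n" "clique {x\<in>{..<n}. 0 < s x} E"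
      "col_count n k r E c \<le> weighted_col_count k r E c s {..<n}"
    unfolding col_count_eq_weighted_col_count by blast
  define P where "P = {x\<in>{..<n}. 0 < s x}"
  have P: "finite P" "P \<subseteq> {..<n}" "clique P E" "\<forall>x\<in>P. 0 < s x"
    using s(2) unfolding P_def by auto
  have outside: "\<forall>x\<in>{..<n} - P. s x = 0" unfolding P_def by auto
  have "weighted_col_count k r E c s {..<n} = weighted_col_count k r UNIV c s P"
    unfolding weighted_col_count_restrict[OF finite_lessThan P(2) outside]
    by (rule weighted_col_count_clique[OF P(3)])
  moreover have "\<forall>e\<in>[P]\<^bsup>2\<^esup>. c e \<in> {1..k}"
  proof
    fix e assume "e \<in> [P]\<^bsup>2\<^esup>"
    then obtain x y where "e = {x, y}" "x \<in> P" "y \<in> P" "x \<noteq> y" by (rule nsets2_E)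
    then show "c e \<in> {1..k}" using P(3) assms(2) unfolding clique_def by blast
  qed
  then obtain g where g: "g \<in> {1..k}" "weighted_col_count k r UNIV c s P \<le> elem_sym P s (r g)"
    using weighted_col_count_le_elem_sym[OF P(1,4) assms(4,5)] by blast
  moreover have "elem_sym P s (r g) \<le> num_cliques n (r g) (turan n (m - 1))"
  proof (rule elem_sym_le_num_cliques_turan[OF P(1)])
    show "card P \<le> m - 1" using clique_card_less_if_Km_free[OF assms(1) P(2,3)] by simp
    show "0 < m - 1" using assms(3) by simp
    show "sum s P = n" using s(1) sum.mono_neutral_right[OF finite_lessThan P(2) outside] by simp
  qed
  ultimately have "col_count n k r E c \<le> num_cliques n (r g) (turan n (m - 1))"
    using s(3) by linarith
  then show ?thesis using g(1) by blast
qed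

lemma num_cliques_empty: "2 \<le> r \<Longrightarrow> num_cliques n r {} = 0"
  using ex_two_elements by (fastforce simp: num_cliques_def)

lemma col_count_monochromatic:
  assumes "i \<in> {1..k}" "\<forall>j\<in>{1..k}. 2 \<le> r j"
  shows "col_count n k r T (\<lambda>_. i) = num_cliques n (r i) T"
proof -
  have "col_count n k r T (\<lambda>_. i) = (\<Sum>j=1..k. if j = i then num_cliques n (r i) T else 0)"
    unfolding col_count_def using assms(2) by (intro sum.cong) (auto simp: num_cliques_empty)
  also have "\<dots> = num_cliques n (r i) T" using assms(1) by simp
  finally show ?thesis .
qed

theorem mainTheorem8:
  fixes n m k :: nat and r :: "nat \<Rightarrow> nat"
  assumes "m \<ge> 2" and "k \<ge> 1" and "\<forall>i\<in>{1..k}. r i \<ge> 2"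
  shows "ex_col n k r m = (MAX i\<in>{1..k}. num_cliques n (r i) (turan n (m - 1)))"
proof -
  let ?T = "turan n (m - 1)"
  let ?R = "MAX i\<in>{1..k}. num_cliques n (r i) ?T"
  let ?V = "{col_count n k r E c | E c. is_graph n E \<and> Km_free n m E \<and> (\<forall>e\<in>E. c e \<in> {1..k})}"
  have upper: "v \<le> ?R" if v: "v \<in> ?V" for v
  proof -
    obtain E c where "v = col_count n k r E c" "Km_free n m E" "\<forall>e\<in>E. c e \<in> {1..k}"
      using v by blast
    then obtain g where "g \<in> {1..k}" "v \<le> num_cliques n (r g) ?T"
      using col_count_le_num_cliques_turan assms by metis
    then show ?thesis by (meson Max_ge finite_atLeastAtMost finite_imageI image_eqI order_trans)
  qed
  have "?R \<in> (\<lambda>i. num_cliques n (r i) ?T) ` {1..k}" using assms(2) by (intro Max_in) auto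
  then obtain i where i: "i \<in> {1..k}" "?R = num_cliques n (r i) ?T" by auto
  have "Km_free n m ?T" using turan_Km_free[of "m - 1" n] assms(1) by (simp add: Suc_diff_Suc)
  moreover have "?R = col_count n k r ?T (\<lambda>_. i)"
    using col_count_monochromatic[OF i(1) assms(3)] i(2) by simp
  ultimately have "?R \<in> ?V"
    using turan_is_graph i(1) by (intro CollectI exI[of _ ?T] exI[of _ "\<lambda>_::nat set. i"]) simp
  moreover have "finite ?V" using upper by (meson finite_nat_set_iff_bounded_le)
  ultimately show ?thesis unfolding ex_col_def using upper by (intro Max_eqI) auto
qed

end
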